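(* Let $A\in\mathbb Z^{d\times n}$ with $\ker(A)\cap\mathbb N^n=\{0\}$. Then the universal distance-reducing Markov basis $\mathcal D(A)$ and the universal strongly distance-reducing Markov basis $\mathcal D^s(A)$ are finite sets.
   Context: For $z\in\mathbb Z^n$, $z^\pm\in\mathbb N^n$ are the unique vectors with disjoint supports and $z=z^+-z^-$; $\|\cdot\|$ is the $1$-norm. For nonzero $z\in\ker(A)$: $u\in\ker(A)$ reduces $z$ from $z^+$ if some $\varepsilon\in\{\pm1\}$ has $z^++\varepsilon u\in\mathbb N^n$ and $\|z^++\varepsilon u-z^-\|<\|z\|$; from $z^-$ if some $\varepsilon$ has $z^-+\varepsilon u\in\mathbb N^n$ and $\|z^+-(z^-+\varepsilon u)\|<\|z\|$. $B\subseteq\ker(A)$ is distance reducing if every nonzero $z\in\ker(A)$ is reduced from $z^+$ or from $z^-$ by some element of $B$; strongly distance reducing if every nonzero $z$ is reduced from $z^+$ by some element of $B$ and from $z^-$ by some (possibly different) element of $B$. A minimal (strongly) distance reducing Markov basis is a (strongly) distance reducing set no proper subset of which is (strongly) distance reducing. $\mathcal D(A)$ (resp. $\mathcal D^s(A)$) is the union of all minimal distance reducing (resp. minimal strongly distance reducing) Markov bases. *)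

theory Defs
  imports "HOL-Analysis.Analysis"
begin

definition kerZ :: "int ^ 'n ^ 'd \<Rightarrow> (int ^ 'n) set" where
  "kerZ A = {z. A *v z = 0}"

definition natvec :: "(int ^ 'n) set" where
  "natvec = {z. \<forall>i. z $ i \<ge> 0}"

definition posp :: "int ^ 'n \<Rightarrow> int ^ 'n" where
  "posp z = (\<chi> i. max (z $ i) 0)"

definition negp :: "int ^ 'n \<Rightarrow> int ^ 'n" where
  "negp z = (\<chi> i. max (- (z $ i)) 0)"

definition norm1 :: "int ^ 'n \<Rightarrow> int" where
  "norm1 z = (\<Sum>i\<in>UNIV. \<bar>z $ i\<bar>)"

definition reduces_pos :: "int ^ 'n \<Rightarrow> int ^ 'n \<Rightarrow> bool" where
  "reduces_pos u z \<longleftrightarrow> (\<exists>\<epsilon>\<in>{1, -1::int}.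
      posp z + \<epsilon> *s u \<in> natvec \<and> norm1 (posp z + \<epsilon> *s u - negp z) < norm1 z)"

definition reduces_neg :: "int ^ 'n \<Rightarrow> int ^ 'n \<Rightarrow> bool" where
  "reduces_neg u z \<longleftrightarrow> (\<exists>\<epsilon>\<in>{1, -1::int}.
      negp z + \<epsilon> *s u \<in> natvec \<and> norm1 (posp z - (negp z + \<epsilon> *s u)) < norm1 z)"

definition dist_reducing :: "int ^ 'n ^ 'd \<Rightarrow> (int ^ 'n) set \<Rightarrow> bool" where
  "dist_reducing A B \<longleftrightarrow> B \<subseteq> kerZ A \<and>
     (\<forall>z\<in>kerZ A. z \<noteq> 0 \<longrightarrow> (\<exists>u\<in>B. reduces_pos u z) \<or> (\<exists>u\<in>B. reduces_neg u z))"

definition strongly_dist_reducing :: "int ^ 'n ^ 'd \<Rightarrow> (int ^ 'n) set \<Rightarrow> bool" where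
  "strongly_dist_reducing A B \<longleftrightarrow> B \<subseteq> kerZ A \<and>
     (\<forall>z\<in>kerZ A. z \<noteq> 0 \<longrightarrow> (\<exists>u\<in>B. reduces_pos u z) \<and> (\<exists>u\<in>B. reduces_neg u z))"

definition minimal_dist_reducing :: "int ^ 'n ^ 'd \<Rightarrow> (int ^ 'n) set \<Rightarrow> bool" where
  "minimal_dist_reducing A B \<longleftrightarrow> dist_reducing A B \<and> (\<forall>B'. B' \<subset> B \<longrightarrow> \<not> dist_reducing A B')"

definition minimal_strongly_dist_reducing :: "int ^ 'n ^ 'd \<Rightarrow> (int ^ 'n) set \<Rightarrow> bool" where
  "minimal_strongly_dist_reducing A B \<longleftrightarrow> strongly_dist_reducing A B \<and>
     (\<forall>B'. B' \<subset> B \<longrightarrow> \<not> strongly_dist_reducing A B')"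

definition universal_DR :: "int ^ 'n ^ 'd \<Rightarrow> (int ^ 'n) set" where
  "universal_DR A = \<Union>{B. minimal_dist_reducing A B}"

definition universal_SDR :: "int ^ 'n ^ 'd \<Rightarrow> (int ^ 'n) set" where
  "universal_SDR A = \<Union>{B. minimal_strongly_dist_reducing A B}"

end

theory Submission
  imports Defs
begin

text \<open>Order the integer vectors conformally: \<open>g \<sqsubseteq> z\<close> iff \<open>g\<^sup>+ \<le> z\<^sup>+\<close> and
\<open>g\<^sup>- \<le> z\<^sup>-\<close>. If \<open>u\<close> reduces \<open>g\<close> from one side, then it reduces every \<open>z \<sqsupseteq> g\<close> from the
same side, and \<open>\<parallel>u\<parallel> < 2\<parallel>g\<parallel>\<close>. By Dickson's lemma the conformal order has no infinite bad
sequences, so below every nonzero element of \<open>ker A\<close> there is a nonzero element of \<open>ker A\<close> of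
norm at most some constant \<open>C\<close>. If \<open>u\<close> lies in a minimal (strongly) distance reducing set \<open>B\<close>,
then some nonzero \<open>z \<in> ker A\<close> is reduced, from a side, by no element of \<open>B\<close> other than \<open>u\<close>;
reducing a small \<open>g \<sqsubseteq> z\<close> instead shows \<open>\<parallel>u\<parallel> < 2C\<close>. So \<open>\<D>(A)\<close> and \<open>\<D>\<^sup>s(A)\<close> lie in a
finite ball.\<close>

lemma incseq_subseq_nat:
  fixes s :: "nat \<Rightarrow> nat"
  shows "\<exists>r. strict_mono r \<and> incseq (s \<circ> r)"
proof -
  obtain f where f: "strict_mono f" "monoseq (s \<circ> f)"
    using seq_monosub[of s] by (auto simp: o_def)
  show ?thesis
  proof (cases "incseq (s \<circ> f)")
    case True
    with f show ?thesis by blast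
  next
    case False
    with f(2) have dec: "decseq (s \<circ> f)"
      by (simp add: monoseq_iff)
    define m where "m = (LEAST v. \<exists>n. s (f n) = v)"
    have "\<exists>n. s (f n) = m"
      unfolding m_def by (rule LeastI_ex) blast
    then obtain N where N: "s (f N) = m" ..
    have const: "s (f n) = m" if "N \<le> n" for n
    proof (rule antisym)
      show "s (f n) \<le> m"
        using dec that N by (metis comp_apply decseq_def)
      show "m \<le> s (f n)"
        unfolding m_def by (rule Least_le) blast
    qed
    have "strict_mono (\<lambda>k. f (k + N))"
      using f(1) by (simp add: strict_mono_def)
    moreover have "incseq (s \<circ> (\<lambda>k. f (k + N)))"
      using const by (simp add: incseq_def)
    ultimately show ?thesis by blast
  qed
qed

lemma dickson_subseq:
  fixes s :: "nat \<Rightarrow> 'i \<Rightarrow> nat"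
  assumes "finite I"
  shows "\<exists>r. strict_mono r \<and> (\<forall>i\<in>I. incseq (\<lambda>k. s (r k) i))"
  using assms
proof (induction I rule: finite_induct)
  case empty
  have "strict_mono (id :: nat \<Rightarrow> nat)"
    by (simp add: strict_mono_def)
  then show ?case by blast
next
  case (insert a I)
  then obtain r where r: "strict_mono r" "\<forall>i\<in>I. incseq (\<lambda>k. s (r k) i)"
    by blast
  obtain q where q: "strict_mono q" "incseq ((\<lambda>k. s (r k) a) \<circ> q)"
    using incseq_subseq_nat[of "\<lambda>k. s (r k) a"] by blast
  have "incseq (\<lambda>k. s (r (q k)) i)" if "i \<in> insert a I" for i
  proof (cases "i = a")
    case True
    with q(2) show ?thesis by (simp add: o_def)
  next
    case False
    with that r(2) have "incseq (\<lambda>k. s (r k) i)" by simp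
    with strict_mono_mono[OF q(1)] show ?thesis
      by (simp add: incseq_def mono_def)
  qed
  moreover have "strict_mono (r \<circ> q)"
    using r(1) q(1) by (rule strict_mono_o)
  ultimately show ?case by auto
qed

definition conformal :: "int ^ 'n \<Rightarrow> int ^ 'n \<Rightarrow> bool" where
  "conformal g z \<longleftrightarrow> posp g \<le> posp z \<and> negp g \<le> negp z"

lemma conformal_iff:
  "conformal g z \<longleftrightarrow> (\<forall>i. max (g $ i) 0 \<le> max (z $ i) 0 \<and> max (- g $ i) 0 \<le> max (- z $ i) 0)"
  by (auto simp: conformal_def less_eq_vec_def posp_def negp_def)

lemma conformal_uminus: "conformal g z \<Longrightarrow> conformal (- g) (- z)"
  by (simp add: conformal_iff)

lemma posp_minus_negp: "posp z - negp z = z"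
  by (simp add: posp_def negp_def vec_eq_iff max_def)

lemma posp_uminus: "posp (- z) = negp z"
  by (simp add: posp_def negp_def)

lemma norm1_uminus: "norm1 (- z) = norm1 z"
  by (simp add: norm1_def)

lemma reduces_pos_iff:
  "reduces_pos u z \<longleftrightarrow>
     (\<exists>\<epsilon>\<in>{1, -1}. posp z + \<epsilon> *s u \<in> natvec \<and> norm1 (z + \<epsilon> *s u) < norm1 z)"
proof -
  have "posp z + v - negp z = z + v" for v
    by (metis diff_add_eq posp_minus_negp)
  then show ?thesis
    by (simp only: reduces_pos_def)
qed

lemma reduces_neg_iff_reduces_pos_uminus: "reduces_neg u z \<longleftrightarrow> reduces_pos u (- z)"
proof -
  have "norm1 (posp z - (negp z + v)) = norm1 (- z + v)" for v
    by (metis diff_diff_eq posp_minus_negp minus_diff_eq norm1_uminus uminus_add_conv_diff)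
  then show ?thesis
    by (simp add: reduces_neg_def reduces_pos_iff posp_uminus norm1_uminus)
qed

text \<open>Coordinatewise, \<open>\<bar>z + v\<bar> \<le> \<bar>g + v\<bar> + \<bar>z - g\<bar> = \<bar>g + v\<bar> + \<bar>z\<bar> - \<bar>g\<bar>\<close>, since \<open>g\<close> and \<open>z\<close>
have the same sign and \<open>\<bar>g\<bar> \<le> \<bar>z\<bar>\<close>.\<close>

lemma norm1_add_diff_le_if_conformal:
  assumes "conformal g z"
  shows "norm1 (z + v) - norm1 z \<le> norm1 (g + v) - norm1 g"
proof -
  have "norm1 (z + v) - norm1 z = (\<Sum>i\<in>UNIV. \<bar>z $ i + v $ i\<bar> - \<bar>z $ i\<bar>)"
    by (simp add: norm1_def sum_subtractf)
  also have "\<dots> \<le> (\<Sum>i\<in>UNIV. \<bar>g $ i + v $ i\<bar> - \<bar>g $ i\<bar>)"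
  proof (rule sum_mono)
    fix i
    from assms have "max (g $ i) 0 \<le> max (z $ i) 0" "max (- g $ i) 0 \<le> max (- z $ i) 0"
      by (simp_all add: conformal_iff)
    then show "\<bar>z $ i + v $ i\<bar> - \<bar>z $ i\<bar> \<le> \<bar>g $ i + v $ i\<bar> - \<bar>g $ i\<bar>"
      by (auto simp: max_def split: if_splits)
  qed
  also have "\<dots> = norm1 (g + v) - norm1 g"
    by (simp add: norm1_def sum_subtractf)
  finally show ?thesis .
qed

lemma reduces_pos_if_conformal:
  assumes "conformal g z" "reduces_pos u g"
  shows "reduces_pos u z"
proof -
  obtain \<epsilon> where \<epsilon>: "\<epsilon> \<in> {1, -1}" "posp g + \<epsilon> *s u \<in> natvec"
    "norm1 (g + \<epsilon> *s u) < norm1 g"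
    using assms(2) unfolding reduces_pos_iff by blast
  have "0 \<le> posp g $ i + \<epsilon> * u $ i" "posp g $ i \<le> posp z $ i" for i
    using \<epsilon>(2) assms(1) by (auto simp: natvec_def conformal_def less_eq_vec_def)
  then have "posp z + \<epsilon> *s u \<in> natvec"
    by (simp add: natvec_def) (meson add_right_mono order_trans)
  moreover have "norm1 (z + \<epsilon> *s u) < norm1 z"
    using norm1_add_diff_le_if_conformal[OF assms(1), of "\<epsilon> *s u"] \<epsilon>(3) by linarith
  ultimately show ?thesis
    using \<epsilon>(1) by (auto simp: reduces_pos_iff)
qed

lemma reduces_neg_if_conformal: "conformal g z \<Longrightarrow> reduces_neg u g \<Longrightarrow> reduces_neg u z"
  unfolding reduces_neg_iff_reduces_pos_uminus by (rule reduces_pos_if_conformal[OF conformal_uminus])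

lemma norm1_less_if_reduces_pos:
  assumes "reduces_pos u z"
  shows "norm1 u < 2 * norm1 z"
proof -
  obtain \<epsilon> :: int where \<epsilon>: "\<epsilon> \<in> {1, -1}" "norm1 (z + \<epsilon> *s u) < norm1 z"
    using assms unfolding reduces_pos_iff by blast
  have "norm1 u \<le> norm1 (z + \<epsilon> *s u) + norm1 z"
    unfolding norm1_def sum.distrib[symmetric]
    using \<epsilon>(1) by (intro sum_mono) auto
  with \<epsilon>(2) show ?thesis by linarith
qed

lemma norm1_less_if_reduces_neg: "reduces_neg u z \<Longrightarrow> norm1 u < 2 * norm1 z"
  using norm1_less_if_reduces_pos[of u "- z"]
  by (simp add: reduces_neg_iff_reduces_pos_uminus norm1_uminus)

lemma conformal_chain_subseq:
  fixes zs :: "nat \<Rightarrow> int ^ 'n"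
  shows "\<exists>r :: nat \<Rightarrow> nat. strict_mono r \<and> (\<forall>k. conformal (zs (r 0)) (zs (r k)))"
proof -
  define s where "s k p = nat (if snd p then posp (zs k) $ fst p else negp (zs k) $ fst p)"
    for k and p :: "'n \<times> bool"
  obtain r where r: "strict_mono r" "\<forall>p. incseq (\<lambda>k. s (r k) p)"
    using dickson_subseq[of "UNIV :: ('n \<times> bool) set" s] by auto
  have "conformal (zs (r 0)) (zs (r k))" for k
  proof -
    have s_mono: "s (r 0) p \<le> s (r k) p" for p
      using r(2) unfolding incseq_def by blast
    have "posp (zs (r 0)) $ i \<le> posp (zs (r k)) $ i \<and> negp (zs (r 0)) $ i \<le> negp (zs (r k)) $ i"
      for i using s_mono[of "(i, True)"] s_mono[of "(i, False)"]
      by (simp add: s_def posp_def negp_def; arith)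
    then show ?thesis
      by (simp add: conformal_def less_eq_vec_def)
  qed
  with r(1) show ?thesis by blast
qed

lemma exists_conformal_norm1_bounded:
  fixes K :: "(int ^ 'n) set"
  shows "\<exists>C. \<forall>z\<in>K. z \<noteq> 0 \<longrightarrow> (\<exists>g\<in>K. g \<noteq> 0 \<and> conformal g z \<and> norm1 g \<le> C)"
proof (rule ccontr)
  assume "\<not> ?thesis"
  then have "\<forall>k::nat. \<exists>z. z \<in> K \<and> z \<noteq> 0 \<and> (\<forall>g\<in>K. g \<noteq> 0 \<and> conformal g z \<longrightarrow> int k < norm1 g)"
    by (meson not_le)
  then obtain zs where zs: "\<And>k. zs k \<in> K" "\<And>k. zs k \<noteq> 0"
    "\<And>k g. g \<in> K \<Longrightarrow> g \<noteq> 0 \<Longrightarrow> conformal g (zs k) \<Longrightarrow> int k < norm1 g"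
    by metis
  obtain r :: "nat \<Rightarrow> nat" where r: "strict_mono r" "\<And>k. conformal (zs (r 0)) (zs (r k))"
    using conformal_chain_subseq[of zs] by blast
  have "int k < norm1 (zs (r 0))" for k
    using zs(3)[OF zs(1,2) r(2)[of k]] seq_suble[OF r(1), of k] by linarith
  from this[of "nat (norm1 (zs (r 0)))"] show False by linarith
qed

lemma finite_norm1_less: "finite {u :: int ^ 'n. norm1 u < M}"
proof (rule finite_subset)
  show "{u :: int ^ 'n. norm1 u < M} \<subseteq> vec_nth -` (UNIV \<rightarrow>\<^sub>E {-M..M})"
  proof
    fix u :: "int ^ 'n"
    assume "u \<in> {u. norm1 u < M}"
    then have "norm1 u < M" by simp
    have "u $ i \<in> {-M..M}" for i
    proof -
      have "\<bar>u $ i\<bar> \<le> norm1 u"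
        unfolding norm1_def by (rule member_le_sum) auto
      with \<open>norm1 u < M\<close> show ?thesis
        unfolding atLeastAtMost_iff abs_le_iff by linarith
    qed
    then show "u \<in> vec_nth -` (UNIV \<rightarrow>\<^sub>E {-M..M})"
      by (simp add: PiE_UNIV_domain)
  qed
  show "finite (vec_nth -` (UNIV \<rightarrow>\<^sub>E {-M..M}) :: (int ^ 'n) set)"
    by (rule finite_vimageI) (auto intro: finite_PiE simp: inj_def vec_eq_iff)
qed

lemma minimal_dist_reducing_essential:
  assumes "minimal_dist_reducing A B" "u \<in> B"
  obtains z where "z \<in> kerZ A" "z \<noteq> 0" "\<And>w. w \<in> B \<Longrightarrow> reduces_pos w z \<or> reduces_neg w z \<Longrightarrow> w = u"
proof -
  have "B - {u} \<subset> B" "B - {u} \<subseteq> kerZ A"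
    using assms by (auto simp: minimal_dist_reducing_def dist_reducing_def)
  then have "\<not> dist_reducing A (B - {u})"
    using assms(1) by (simp add: minimal_dist_reducing_def)
  with \<open>B - {u} \<subseteq> kerZ A\<close> that show ?thesis
    unfolding dist_reducing_def by blast
qed

lemma minimal_strongly_dist_reducing_essential:
  assumes "minimal_strongly_dist_reducing A B" "u \<in> B"
  obtains z where "z \<in> kerZ A" "z \<noteq> 0" "\<And>w. w \<in> B \<Longrightarrow> reduces_pos w z \<Longrightarrow> w = u"
  | z where "z \<in> kerZ A" "z \<noteq> 0" "\<And>w. w \<in> B \<Longrightarrow> reduces_neg w z \<Longrightarrow> w = u"
proof -
  have "B - {u} \<subset> B" "B - {u} \<subseteq> kerZ A"
    using assms by (auto simp: minimal_strongly_dist_reducing_def strongly_dist_reducing_def)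
  then have "\<not> strongly_dist_reducing A (B - {u})"
    using assms(1) by (simp add: minimal_strongly_dist_reducing_def)
  with \<open>B - {u} \<subseteq> kerZ A\<close> that show ?thesis
    unfolding strongly_dist_reducing_def by blast
qed

lemma norm1_less_if_minimal_dist_reducing:
  assumes bound: "\<And>z. z \<in> kerZ A \<Longrightarrow> z \<noteq> 0 \<Longrightarrow> \<exists>g\<in>kerZ A. g \<noteq> 0 \<and> conformal g z \<and> norm1 g \<le> C"
    and "minimal_dist_reducing A B" "u \<in> B"
  shows "norm1 u < 2 * C"
proof -
  obtain z where z: "z \<in> kerZ A" "z \<noteq> 0"
    and only_u: "\<And>w. w \<in> B \<Longrightarrow> reduces_pos w z \<or> reduces_neg w z \<Longrightarrow> w = u"
    using minimal_dist_reducing_essential[OF assms(2,3)] by blast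
  obtain g where g: "g \<in> kerZ A" "g \<noteq> 0" "conformal g z" "norm1 g \<le> C"
    using bound[OF z] by blast
  obtain w where "w \<in> B" "reduces_pos w g \<or> reduces_neg w g"
    using assms(2) g(1,2) by (auto simp: minimal_dist_reducing_def dist_reducing_def)
  moreover from this g(3) have "w = u"
    by (meson only_u reduces_pos_if_conformal reduces_neg_if_conformal)
  ultimately have "norm1 u < 2 * norm1 g"
    using norm1_less_if_reduces_pos norm1_less_if_reduces_neg by blast
  with g(4) show ?thesis by linarith
qed

lemma norm1_less_if_minimal_strongly_dist_reducing:
  assumes bound: "\<And>z. z \<in> kerZ A \<Longrightarrow> z \<noteq> 0 \<Longrightarrow> \<exists>g\<in>kerZ A. g \<noteq> 0 \<and> conformal g z \<and> norm1 g \<le> C"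
    and "minimal_strongly_dist_reducing A B" "u \<in> B"
  shows "norm1 u < 2 * C"
proof -
  have reducers: "\<exists>w\<in>B. reduces_pos w g" "\<exists>w\<in>B. reduces_neg w g"
    if "g \<in> kerZ A" "g \<noteq> 0" for g
    using assms(2) that by (auto simp: minimal_strongly_dist_reducing_def strongly_dist_reducing_def)
  from assms(2,3) show ?thesis
  proof (cases rule: minimal_strongly_dist_reducing_essential)
    case (1 z)
    then obtain g where g: "g \<in> kerZ A" "g \<noteq> 0" "conformal g z" "norm1 g \<le> C"
      using bound by blast
    with reducers(1) 1(3) have "reduces_pos u g"
      by (metis reduces_pos_if_conformal)
    with g(4) show ?thesis
      using norm1_less_if_reduces_pos by fastforce
  next
    case (2 z)
    then obtain g where g: "g \<in> kerZ A" "g \<noteq> 0" "conformal g z" "norm1 g \<le> C"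
      using bound by blast
    with reducers(2) 2(3) have "reduces_neg u g"
      by (metis reduces_neg_if_conformal)
    with g(4) show ?thesis
      using norm1_less_if_reduces_neg by fastforce
  qed
qed

theorem corollary8p17:
  fixes A :: "int ^ 'n ^ 'd"
  assumes "kerZ A \<inter> natvec = {0}"
  shows "finite (universal_DR A) \<and> finite (universal_SDR A)"
proof -
  obtain C where C: "\<And>z. z \<in> kerZ A \<Longrightarrow> z \<noteq> 0 \<Longrightarrow> \<exists>g\<in>kerZ A. g \<noteq> 0 \<and> conformal g z \<and> norm1 g \<le> C"
    using exists_conformal_norm1_bounded[of "kerZ A"] by blast
  have "universal_DR A \<subseteq> {u. norm1 u < 2 * C}"
    using norm1_less_if_minimal_dist_reducing[OF C] by (auto simp: universal_DR_def)
  moreover have "universal_SDR A \<subseteq> {u. norm1 u < 2 * C}"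
    using norm1_less_if_minimal_strongly_dist_reducing[OF C] by (auto simp: universal_SDR_def)
  ultimately show ?thesis
    using finite_norm1_less finite_subset by blast
qed

end
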